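(* In the standard variable-processor cup game on $n$ cups starting from all fills $0$, against a greedy emptier, the filler has a strategy that achieves a backlog of at least $\frac{n-1}{2}$ within at most $n^3$ rounds.
   Context: The (standard) variable-processor cup game on $n$ cups: real fills $x_1,\dots,x_n$; in each round the filler chooses an integer $1\le p\le n$ and reals $a_i\in[0,1]$ with $\sum_i a_i=p$ and adds $a_i$ to cup $i$; then the emptier chooses $p$ distinct cups and replaces each of their fills $x$ by $\max(0,x-1)$. The backlog is $\max_i x_i$. The greedy emptier empties from the $p$ fullest cups after the filler's move. *)

theory Defs
  imports Complex_Main
begin

text \<open>Variable-processor cup game on n cups, indexed 0..n-1. A state is a fill
  function x :: nat => real (only values at indices < n matter).\<close>

definition backlog :: "nat \<Rightarrow> (nat \<Rightarrow> real) \<Rightarrow> real" where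
  "backlog n x = Max (x ` {..<n})"

definition valid_fill :: "nat \<Rightarrow> nat \<Rightarrow> (nat \<Rightarrow> real) \<Rightarrow> bool" where
  "valid_fill n p a \<longleftrightarrow> 1 \<le> p \<and> p \<le> n \<and> (\<forall>i<n. 0 \<le> a i \<and> a i \<le> 1)
     \<and> (\<Sum>i<n. a i) = real p"

definition greedy_choice :: "nat \<Rightarrow> nat \<Rightarrow> (nat \<Rightarrow> real) \<Rightarrow> nat set \<Rightarrow> bool" where
  "greedy_choice n p y S \<longleftrightarrow> S \<subseteq> {..<n} \<and> card S = p
     \<and> (\<forall>i\<in>S. \<forall>j\<in>{..<n} - S. y j \<le> y i)"

definition empty_cups :: "nat set \<Rightarrow> (nat \<Rightarrow> real) \<Rightarrow> nat \<Rightarrow> real" where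
  "empty_cups S y = (\<lambda>i. if i \<in> S then max 0 (y i - 1) else y i)"

text \<open>filler_forces n B k x: from state x, the filler has a (adaptive) strategy
  guaranteeing that within at most k further rounds (including now) the backlog
  reaches at least B, against every greedy emptier.\<close>
fun filler_forces :: "nat \<Rightarrow> real \<Rightarrow> nat \<Rightarrow> (nat \<Rightarrow> real) \<Rightarrow> bool" where
  "filler_forces n B 0 x = (B \<le> backlog n x)"
| "filler_forces n B (Suc k) x =
     (B \<le> backlog n x \<or>
      (\<exists>p a. valid_fill n p a \<and>
         (\<forall>S. greedy_choice n p (\<lambda>i. x i + a i) S \<longrightarrow>
              filler_forces n B k (empty_cups S (\<lambda>i. x i + a i)))))"

end

theory Submission
  imports Defs
begin

(* Keep every fill a nonnegative multiple of 1/2 and track the potential sum_m (2 x_m)^2.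
   While the backlog is below (n - 1)/2, the n fills take at most n - 1 values, so two cups i, j
   share a fill h, and the potential is below n (n - 1)^2.  The filler then pours 1/2 into i and j
   and 1 into every other cup with fill at least h.  Those cups now exceed h + 1/2 and all others
   are at most h - 1/2, so the greedy emptier must empty them (leaving them unchanged) and exactly
   one of i, j: the pair moves to max 0 (h - 1/2) and h + 1/2, which raises the potential by at
   least 1.  Hence the backlog reaches (n - 1)/2 within n (n - 1)^2 <= n^3 rounds. *)

definition half_integral_fills :: "nat \<Rightarrow> (nat \<Rightarrow> real) \<Rightarrow> bool" where
  "half_integral_fills n x \<longleftrightarrow> (\<forall>m<n. \<exists>L::nat. x m = real L / 2)"

definition potential :: "nat \<Rightarrow> (nat \<Rightarrow> real) \<Rightarrow> real" where
  "potential n x = (\<Sum>m<n. (2 * x m)\<^sup>2)"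

lemma fill_le_backlog: "m < n \<Longrightarrow> x m \<le> backlog n x"
  unfolding backlog_def by (intro Max_ge) auto

lemma half_integral_fills_nonneg: "half_integral_fills n x \<Longrightarrow> m < n \<Longrightarrow> 0 \<le> x m"
  unfolding half_integral_fills_def by fastforce

lemma low_backlog_fill_level:
  assumes "half_integral_fills n x" "backlog n x < (real n - 1) / 2" "m < n"
  obtains L :: nat where "L < n - 1" "x m = real L / 2"
proof -
  obtain L :: nat where L: "x m = real L / 2"
    using assms(1,3) unfolding half_integral_fills_def by blast
  have "x m < (real n - 1) / 2"
    using fill_le_backlog[OF assms(3), of x] assms(2) by linarith
  then have "real L < real n - 1"
    using L by simp
  then have "L < n - 1" by linarith
  then show thesis
    using L by (rule that)
qed

lemma low_backlog_potential_bound: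
  assumes "n \<ge> 1" "half_integral_fills n x" "backlog n x < (real n - 1) / 2"
  shows "potential n x < real n * (real n - 1)\<^sup>2"
proof -
  have level_bound: "(2 * x m)\<^sup>2 \<le> (real n - 1)\<^sup>2 - 1" if m: "m < n" for m
  proof -
    obtain L where L: "L < n - 1" "x m = real L / 2"
      using low_backlog_fill_level[OF assms(2,3) m] by blast
    then have "real L \<le> real n - 2" by linarith
    then have "(2 * x m)\<^sup>2 \<le> (real n - 2)\<^sup>2"
      using L(2) by (intro power_mono) auto
    also have "\<dots> \<le> (real n - 1)\<^sup>2 - 1"
      using \<open>real L \<le> real n - 2\<close> by (simp add: power2_eq_square algebra_simps)
    finally show ?thesis .
  qed
  have "potential n x \<le> real (card {..<n}) * ((real n - 1)\<^sup>2 - 1)"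
    unfolding potential_def by (rule sum_bounded_above) (use level_bound in auto)
  then show ?thesis
    using assms(1) by (simp add: algebra_simps)
qed

lemma low_backlog_equal_fills:
  assumes "n \<ge> 1" "half_integral_fills n x" "backlog n x < (real n - 1) / 2"
  obtains i j where "i < n" "j < n" "i \<noteq> j" "x i = x j"
proof -
  have "x ` {..<n} \<subseteq> (\<lambda>L. real L / 2) ` {..<n - 1}"
    using low_backlog_fill_level[OF assms(2,3)] by blast
  then have "card (x ` {..<n}) \<le> card ((\<lambda>L. real L / 2) ` {..<n - 1})"
    by (intro card_mono) auto
  also have "\<dots> \<le> n - 1"
    using card_image_le[of "{..<n - 1}"] by simp
  also have "\<dots> < card {..<n}"
    using assms(1) by simp
  finally have "\<not> inj_on x {..<n}" by (rule pigeonhole)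
  then show thesis using that unfolding inj_on_def by auto
qed

lemma half_integral_fills_gap:
  assumes "half_integral_fills n x" "m < n" "k < n" "x m < x k"
  shows "x m \<le> x k - 1 / 2"
proof -
  obtain L K :: nat where "x m = real L / 2" "x k = real K / 2"
    using assms(1-3) unfolding half_integral_fills_def by meson
  moreover from this have "L < K" using assms(4) by simp
  ultimately show ?thesis by simp
qed

lemma half_integral_fills_update:
  assumes "half_integral_fills n x"
  shows "half_integral_fills n (x(s := max 0 (x s - 1 / 2), t := x t + 1 / 2))"
  unfolding half_integral_fills_def
proof (intro allI impI)
  fix m assume "m < n"
  then obtain L :: nat where L: "x m = real L / 2"
    using assms unfolding half_integral_fills_def by blast
  have "max 0 (x m - 1 / 2) = real (L - 1) / 2"
    using L by (cases L) auto
  moreover have "x m + 1 / 2 = real (Suc L) / 2"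
    using L by simp
  moreover have "(x(s := max 0 (x s - 1 / 2), t := x t + 1 / 2)) m
      \<in> {max 0 (x m - 1 / 2), x m + 1 / 2, x m}"
    by simp
  ultimately show "\<exists>L::nat. (x(s := max 0 (x s - 1 / 2), t := x t + 1 / 2)) m = real L / 2"
    using L by (metis insert_iff empty_iff)
qed

lemma potential_update:
  assumes "s < n"
  shows "potential n (x(s := a)) = potential n x - (2 * x s)\<^sup>2 + (2 * a)\<^sup>2"
proof -
  have rest: "(\<Sum>m\<in>{..<n} - {s}. (2 * (x(s := a)) m)\<^sup>2)
      = (\<Sum>m\<in>{..<n} - {s}. (2 * x m)\<^sup>2)"
    by (rule sum.cong) auto
  show ?thesis
    unfolding potential_def
    using sum.remove[of "{..<n}" s "\<lambda>m. (2 * (x(s := a)) m)\<^sup>2"]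
      sum.remove[of "{..<n}" s "\<lambda>m. (2 * x m)\<^sup>2"] rest assms
    by simp
qed

lemma potential_split_increase:
  assumes "half_integral_fills n x" "s < n" "t < n" "s \<noteq> t" "x s = x t"
  shows "potential n x + 1 \<le> potential n (x(s := max 0 (x s - 1 / 2), t := x t + 1 / 2))"
proof -
  obtain K :: nat where K: "x s = real K / 2"
    using assms(1,2) unfolding half_integral_fills_def by blast
  have "(2 * x s)\<^sup>2 + (2 * x t)\<^sup>2 + 1
      \<le> (2 * max 0 (x s - 1 / 2))\<^sup>2 + (2 * (x t + 1 / 2))\<^sup>2"
    using K assms(5) by (cases K) (auto simp: power2_eq_square algebra_simps)
  then show ?thesis
    using assms(2-4) by (simp add: potential_update)
qed

lemma greedy_choice_contains_above:
  assumes "greedy_choice n p y S" "card {m. m < n \<and> c < y m} \<le> p"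
  shows "{m. m < n \<and> c < y m} \<subseteq> S"
proof
  fix f assume f: "f \<in> {m. m < n \<and> c < y m}"
  show "f \<in> S"
  proof (rule ccontr)
    assume "f \<notin> S"
    have "S \<subseteq> {m. m < n \<and> c < y m}"
    proof
      fix s assume "s \<in> S"
      then have "s < n" "y f \<le> y s"
        using assms(1) f \<open>f \<notin> S\<close> unfolding greedy_choice_def by auto
      then show "s \<in> {m. m < n \<and> c < y m}"
        using f by auto
    qed
    then have "S \<subset> {m. m < n \<and> c < y m}"
      using f \<open>f \<notin> S\<close> by blast
    then have "card S < card {m. m < n \<and> c < y m}"
      by (intro psubset_card_mono) auto
    then show False
      using assms unfolding greedy_choice_def by simp
  qed
qed

lemma greedy_choice_within_at_least:
  assumes "greedy_choice n p y S" "p \<le> card {m. m < n \<and> c \<le> y m}"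
  shows "S \<subseteq> {m. m < n \<and> c \<le> y m}"
proof
  fix w assume w: "w \<in> S"
  show "w \<in> {m. m < n \<and> c \<le> y m}"
  proof (rule ccontr)
    assume w_low: "w \<notin> {m. m < n \<and> c \<le> y m}"
    have "{m. m < n \<and> c \<le> y m} \<subseteq> S - {w}"
    proof
      fix m assume m: "m \<in> {m. m < n \<and> c \<le> y m}"
      have "w < n"
        using assms(1) w unfolding greedy_choice_def by auto
      have "m \<in> S"
      proof (rule ccontr)
        assume "m \<notin> S"
        then have "y m \<le> y w"
          using assms(1) w m unfolding greedy_choice_def by auto
        then show False
          using m w_low \<open>w < n\<close> by auto
      qed
      then show "m \<in> S - {w}"
        using m w_low by auto
    qed
    then have "card {m. m < n \<and> c \<le> y m} \<le> card (S - {w})"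
      using assms(1) unfolding greedy_choice_def
      by (intro card_mono) (auto intro: finite_subset)
    also have "\<dots> < p"
      using assms(1) w unfolding greedy_choice_def
      by (metis card_Diff1_less finite_lessThan finite_subset)
    finally show False
      using assms(2) by simp
  qed
qed

definition fuller_cups :: "nat \<Rightarrow> (nat \<Rightarrow> real) \<Rightarrow> nat \<Rightarrow> nat \<Rightarrow> nat set" where
  "fuller_cups n x i j = {m. m < n \<and> m \<noteq> i \<and> m \<noteq> j \<and> x i \<le> x m}"

definition split_fill :: "nat \<Rightarrow> (nat \<Rightarrow> real) \<Rightarrow> nat \<Rightarrow> nat \<Rightarrow> nat \<Rightarrow> real" where
  "split_fill n x i j m =
     (if m = i \<or> m = j then 1 / 2 else if m \<in> fuller_cups n x i j then 1 else 0)"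

lemma fuller_cups_subset: "fuller_cups n x i j \<subseteq> {..<n} - {i, j}"
  unfolding fuller_cups_def by auto

lemma finite_fuller_cups [simp]: "finite (fuller_cups n x i j)"
  by (rule finite_subset[OF fuller_cups_subset]) simp

lemma valid_fill_split_fill:
  assumes "i < n" "j < n" "i \<noteq> j"
  shows "valid_fill n (Suc (card (fuller_cups n x i j))) (split_fill n x i j)"
proof -
  define F where "F = fuller_cups n x i j"
  have F: "F \<subseteq> {..<n} - {i, j}"
    unfolding F_def by (rule fuller_cups_subset)
  have "card F \<le> card ({..<n} - {i, j})"
    using F by (intro card_mono) auto
  also have "\<dots> = n - 2"
    using assms by (simp add: card_Diff_subset)
  finally have card_F: "card F \<le> n - 2" .
  have "(\<Sum>m<n. split_fill n x i j m)
      = sum (split_fill n x i j) ({..<n} - F) + sum (split_fill n x i j) F"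
    by (rule sum.subset_diff) (use F in auto)
  also have "sum (split_fill n x i j) ({..<n} - F)
      = sum (split_fill n x i j) ({..<n} - F - {i, j}) + sum (split_fill n x i j) {i, j}"
    by (rule sum.subset_diff) (use F assms in auto)
  also have "sum (split_fill n x i j) ({..<n} - F - {i, j}) = 0"
    unfolding split_fill_def F_def by (intro sum.neutral) auto
  also have "sum (split_fill n x i j) {i, j} = 1"
    using assms unfolding split_fill_def by simp
  also have "sum (split_fill n x i j) F = card F"
    using F unfolding split_fill_def F_def[symmetric] by (simp add: subset_iff)
  finally have "(\<Sum>m<n. split_fill n x i j m) = real (Suc (card F))"
    by simp
  moreover have "0 \<le> split_fill n x i j m \<and> split_fill n x i j m \<le> 1" for m
    unfolding split_fill_def by simp
  moreover have "Suc (card F) \<le> n"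
    using card_F assms by linarith
  ultimately show ?thesis
    unfolding valid_fill_def F_def[symmetric] by auto
qed

lemma greedy_choice_after_split_fill:
  assumes "half_integral_fills n x" "i < n" "j < n" "i \<noteq> j" "x i = x j"
    and "greedy_choice n (Suc (card (fuller_cups n x i j))) (\<lambda>m. x m + split_fill n x i j m) S"
  obtains s t where "{s, t} = {i, j}" "t \<notin> S" "S = insert s (fuller_cups n x i j)"
proof -
  define F where "F = fuller_cups n x i j"
  define y where "y m = x m + split_fill n x i j m" for m
  have gc: "greedy_choice n (Suc (card F)) y S"
    using assms(6) unfolding F_def y_def .
  have ij_F: "i \<notin> F" "j \<notin> F"
    using fuller_cups_subset unfolding F_def by blast+
  have levels: "(m \<in> F \<and> x i + 1 \<le> y m) \<or> ((m = i \<or> m = j) \<and> y m = x i + 1 / 2)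
      \<or> (m \<notin> insert i (insert j F) \<and> y m \<le> x i - 1 / 2)" if "m < n" for m
  proof (cases "m \<in> insert i (insert j F)")
    case True
    then show ?thesis
      using assms(5) ij_F unfolding y_def split_fill_def F_def[symmetric]
      by (auto simp: F_def fuller_cups_def)
  next
    case False
    then have "x m < x i"
      using that unfolding F_def fuller_cups_def by auto
    then have "x m \<le> x i - 1 / 2"
      using half_integral_fills_gap[OF assms(1) that assms(2)] by blast
    then show ?thesis
      using False unfolding y_def split_fill_def F_def[symmetric] by auto
  qed
  have F_n: "m < n" if "m \<in> F" for m
    using that fuller_cups_subset unfolding F_def by blast
  have "{m. m < n \<and> x i + 1 / 2 < y m} = F"
  proof (rule set_eqI)
    fix m
    show "m \<in> {m. m < n \<and> x i + 1 / 2 < y m} \<longleftrightarrow> m \<in> F"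
      by (cases "m < n") (use levels[of m] F_n[of m] ij_F in auto)
  qed
  then have F_S: "F \<subseteq> S"
    using greedy_choice_contains_above[OF gc, of "x i + 1 / 2"] by simp
  have "{m. m < n \<and> x i + 1 / 2 \<le> y m} = insert i (insert j F)"
  proof (rule set_eqI)
    fix m
    show "m \<in> {m. m < n \<and> x i + 1 / 2 \<le> y m} \<longleftrightarrow> m \<in> insert i (insert j F)"
      by (cases "m < n") (use levels[of m] F_n[of m] assms(2,3) in auto)
  qed
  moreover have card_ijF: "card (insert i (insert j F)) = Suc (Suc (card F))"
    using ij_F assms(4) unfolding F_def by simp
  ultimately have S_ijF: "S \<subseteq> insert i (insert j F)"
    using greedy_choice_within_at_least[OF gc, of "x i + 1 / 2"] by simp
  have card_S: "card S = Suc (card F)" and fin_S: "finite S"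
    using gc finite_subset unfolding greedy_choice_def by auto
  have "\<not> insert i (insert j F) \<subseteq> S"
    using card_mono[OF fin_S, of "insert i (insert j F)"] card_ijF card_S by auto
  moreover have "\<not> S \<subseteq> F"
    using card_mono[of F S] card_S unfolding F_def by auto
  ultimately consider "i \<in> S" "j \<notin> S" | "j \<in> S" "i \<notin> S"
    using F_S S_ijF by blast
  then show thesis
  proof cases
    case 1
    then show thesis
      using that[of i j] F_S S_ijF unfolding F_def by blast
  next
    case 2
    then show thesis
      using that[of j i] F_S S_ijF unfolding F_def by blast
  qed
qed

lemma split_fill_progress:
  assumes "half_integral_fills n x" "i < n" "j < n" "i \<noteq> j" "x i = x j"
    and "greedy_choice n (Suc (card (fuller_cups n x i j))) (\<lambda>m. x m + split_fill n x i j m) S"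
  shows "half_integral_fills n (empty_cups S (\<lambda>m. x m + split_fill n x i j m))"
    and "potential n x + 1 \<le> potential n (empty_cups S (\<lambda>m. x m + split_fill n x i j m))"
proof -
  obtain s t where st: "{s, t} = {i, j}" "t \<notin> S" "S = insert s (fuller_cups n x i j)"
    using greedy_choice_after_split_fill[OF assms] .
  have s_t: "s \<noteq> t" "s < n" "t < n" "x s = x t"
    using st(1) assms(2-5) by (auto simp: doubleton_eq_iff)
  have st_F: "s \<notin> fuller_cups n x i j" "t \<notin> fuller_cups n x i j"
    using st(1) fuller_cups_subset by blast+
  have "empty_cups S (\<lambda>m. x m + split_fill n x i j m)
      = x(s := max 0 (x s - 1 / 2), t := x t + 1 / 2)"
  proof
    fix m
    show "empty_cups S (\<lambda>m. x m + split_fill n x i j m) m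
      = (x(s := max 0 (x s - 1 / 2), t := x t + 1 / 2)) m"
    proof (cases "m \<in> fuller_cups n x i j")
      case True
      then have "0 \<le> x m"
        using half_integral_fills_nonneg[OF assms(1)] fuller_cups_subset by blast
      then show ?thesis
        using True st st_F unfolding empty_cups_def split_fill_def by auto
    next
      case False
      then show ?thesis
        using st st_F unfolding empty_cups_def split_fill_def by auto
    qed
  qed
  then show "half_integral_fills n (empty_cups S (\<lambda>m. x m + split_fill n x i j m))"
    and "potential n x + 1 \<le> potential n (empty_cups S (\<lambda>m. x m + split_fill n x i j m))"
    using half_integral_fills_update[OF assms(1)]
      potential_split_increase[OF assms(1) s_t(2,3,1,4)] by simp_all
qed

lemma filler_forces_from_potential:
  assumes "n \<ge> 1" "half_integral_fills n x" "real n * (real n - 1)\<^sup>2 \<le> real k + potential n x"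
  shows "filler_forces n ((real n - 1) / 2) k x"
  using assms(2,3)
proof (induction k arbitrary: x)
  case 0
  have "\<not> backlog n x < (real n - 1) / 2"
    using low_backlog_potential_bound[OF assms(1) "0.prems"(1)] "0.prems"(2) by auto
  then show ?case by simp
next
  case (Suc k)
  show ?case
  proof (cases "(real n - 1) / 2 \<le> backlog n x")
    case True
    then show ?thesis by simp
  next
    case False
    then obtain i j where ij: "i < n" "j < n" "i \<noteq> j" "x i = x j"
      using low_backlog_equal_fills[OF assms(1) Suc.prems(1) False[unfolded not_le]] by blast
    have "filler_forces n ((real n - 1) / 2) k (empty_cups S (\<lambda>m. x m + split_fill n x i j m))"
      if "greedy_choice n (Suc (card (fuller_cups n x i j))) (\<lambda>m. x m + split_fill n x i j m) S" for S
    proof (rule Suc.IH)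
      show "half_integral_fills n (empty_cups S (\<lambda>m. x m + split_fill n x i j m))"
        by (rule split_fill_progress(1)[OF Suc.prems(1) ij that])
      show "real n * (real n - 1)\<^sup>2
          \<le> real k + potential n (empty_cups S (\<lambda>m. x m + split_fill n x i j m))"
        using split_fill_progress(2)[OF Suc.prems(1) ij that] Suc.prems(2) by simp
    qed
    then show ?thesis
      using valid_fill_split_fill[OF ij(1-3)] unfolding filler_forces.simps by blast
  qed
qed

theorem theorem5p2:
  fixes n :: nat
  assumes "n \<ge> 1"
  shows "filler_forces n ((real n - 1) / 2) (n ^ 3) (\<lambda>_. 0)"
proof (rule filler_forces_from_potential[OF assms])
  show "half_integral_fills n (\<lambda>_. 0)"
    unfolding half_integral_fills_def by (auto intro: exI[of _ 0])
  have "real n * (real n - 1)\<^sup>2 \<le> real n * (real n)\<^sup>2"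
    using assms by (intro mult_left_mono power_mono) auto
  then show "real n * (real n - 1)\<^sup>2 \<le> real (n ^ 3) + potential n (\<lambda>_. 0)"
    unfolding potential_def by (simp add: power2_eq_square power3_eq_cube)
qed

end
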